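(* Let $n,m$ be positive integers, let ${\cal P}$ be an additive hereditary graph class with ${\cal P}\subseteq Free(K_n)$, and let ${\cal Q}$ be a hereditary graph class whose complement class $\overline{{\cal Q}}$ is additive, with ${\cal Q}\subseteq Free(\overline{K}_m)$. Then there exists a constant $\tau=\tau({\cal P},{\cal Q})$ such that for every graph $G=(V,E)\in{\cal P}\circ{\cal Q}$ and every subset $B\subseteq V$ with $G[B]\in{\cal P}$, at least one of the following holds: (a) there is a subset $A\subseteq V$ such that $G[A]\in{\cal P}$, $G[V\setminus A]\in{\cal Q}$, and $|A\setminus B|\le\tau$; (b) there is a subset $C\subseteq V$ such that $G[C]\in{\cal P}$, $|C|=|B|+1$, and $|B\setminus C|\le\tau$.
   Context: All graphs are finite and simple; classes are closed under isomorphism. $K_n$ is the complete graph on $n$ vertices and $\overline{K}_m$ the edgeless graph on $m$ vertices. $Free(Y)$ is the class of graphs containing no induced subgraph isomorphic to a graph in $Y$. A class is hereditary if closed under vertex deletion, additive if closed under disjoint union; $\overline{{\cal Q}}=\{\overline{G}\mid G\in{\cal Q}\}$. $G[U]$ is the subgraph induced by $U$. ${\cal P}\circ{\cal Q}$ is the class of graphs $G$ whose vertex set can be partitioned into $V_1,V_2$ with $G[V_1]\in{\cal P}$, $G[V_2]\in{\cal Q}$. *)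

theory Defs
  imports Main
begin

text \<open>A (finite simple) graph: a vertex set and a symmetric irreflexive edge relation
on it. Vertices are natural numbers; since graph classes are closed under isomorphism,
this loses no generality.\<close>

type_synonym graph = "nat set \<times> (nat \<times> nat) set"

definition verts :: "graph \<Rightarrow> nat set" where "verts G = fst G"
definition edges :: "graph \<Rightarrow> (nat \<times> nat) set" where "edges G = snd G"

definition wf_graph :: "graph \<Rightarrow> bool" where
  "wf_graph G \<longleftrightarrow> finite (verts G) \<and> edges G \<subseteq> verts G \<times> verts G
     \<and> (\<forall>x y. (x, y) \<in> edges G \<longrightarrow> (y, x) \<in> edges G)
     \<and> (\<forall>x. (x, x) \<notin> edges G)"

definition graph_iso :: "graph \<Rightarrow> graph \<Rightarrow> bool" where
  "graph_iso G H \<longleftrightarrow> (\<exists>f. bij_betw f (verts G) (verts H) \<and>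
     (\<forall>x\<in>verts G. \<forall>y\<in>verts G. (x, y) \<in> edges G \<longleftrightarrow> (f x, f y) \<in> edges H))"

definition induced :: "graph \<Rightarrow> nat set \<Rightarrow> graph" where
  "induced G U = (verts G \<inter> U, edges G \<inter> (U \<times> U))"

definition complement :: "graph \<Rightarrow> graph" where
  "complement G = (verts G, {(x, y). x \<in> verts G \<and> y \<in> verts G \<and> x \<noteq> y \<and> (x, y) \<notin> edges G})"

definition disj_union :: "graph \<Rightarrow> graph \<Rightarrow> graph" where
  "disj_union G H = (verts G \<union> verts H, edges G \<union> edges H)"

definition graph_class :: "graph set \<Rightarrow> bool" where
  "graph_class P \<longleftrightarrow> (\<forall>G\<in>P. wf_graph G) \<and>
     (\<forall>G H. G \<in> P \<longrightarrow> wf_graph H \<longrightarrow> graph_iso G H \<longrightarrow> H \<in> P)"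

definition hereditary :: "graph set \<Rightarrow> bool" where
  "hereditary P \<longleftrightarrow> (\<forall>G\<in>P. \<forall>U. U \<subseteq> verts G \<longrightarrow> induced G U \<in> P)"

definition additive :: "graph set \<Rightarrow> bool" where
  "additive P \<longleftrightarrow> (\<forall>G\<in>P. \<forall>H\<in>P. verts G \<inter> verts H = {} \<longrightarrow> disj_union G H \<in> P)"

definition compl_class :: "graph set \<Rightarrow> graph set" where
  "compl_class Q = complement ` Q"

definition complete_graph :: "nat \<Rightarrow> graph" ("K\<^sub>_") where
  "complete_graph n = ({0..<n}, {(x, y). x < n \<and> y < n \<and> x \<noteq> y})"

definition edgeless_graph :: "nat \<Rightarrow> graph" where
  "edgeless_graph m = ({0..<m}, {})"

definition Free :: "graph set \<Rightarrow> graph set" where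
  "Free Y = {G. wf_graph G \<and> \<not> (\<exists>U \<subseteq> verts G. \<exists>H\<in>Y. graph_iso (induced G U) H)}"

definition compose :: "graph set \<Rightarrow> graph set \<Rightarrow> graph set" (infixl "\<circ>\<^sub>G" 65) where
  "compose P Q = {G. wf_graph G \<and> (\<exists>V1 V2. V1 \<union> V2 = verts G \<and> V1 \<inter> V2 = {}
      \<and> induced G V1 \<in> P \<and> induced G V2 \<in> Q)}"

end

theory Submission
  imports Defs "HOL-Library.Ramsey"
begin

(* Graphs containing neither K_n nor an independent set of size m have fewer than R(n, m)
   vertices by Ramsey's theorem. Given a partition V1, V2 of G into a P-part and a Q-part,
   the part B - V1 of B lies in P and in Q, so it is small. Either V1 itself is close to B,
   or V1 - B has room to replace B - V1 by one more vertex, giving a larger P-set inside V1. *)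

hide_const (open) FuncSet.compose

lemma verts_pair [simp]: "verts (V, E) = V"
  and edges_pair [simp]: "edges (V, E) = E"
  by (simp_all add: verts_def edges_def)

lemma verts_induced [simp]: "verts (induced G U) = verts G \<inter> U"
  by (simp add: induced_def verts_def)

lemma edges_induced [simp]: "edges (induced G U) = edges G \<inter> (U \<times> U)"
  by (simp add: induced_def edges_def)

lemma induced_induced [simp]: "induced (induced G A) U = induced G (A \<inter> U)"
  by (auto simp: induced_def verts_def edges_def)

lemma hereditary_induced_subset:
  assumes "hereditary P" "induced G A \<in> P" "U \<subseteq> A" "U \<subseteq> verts G"
  shows "induced G U \<in> P"
proof -
  have "induced (induced G A) U \<in> P"
    using assms unfolding hereditary_def by auto
  then show ?thesis
    using \<open>U \<subseteq> A\<close> by (simp add: Int_absorb1)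
qed

lemma graph_iso_induced_uniform:
  assumes "finite R" "R \<subseteq> verts H"
    and adj: "\<And>x y. x \<in> R \<Longrightarrow> y \<in> R \<Longrightarrow> (x, y) \<in> edges H \<longleftrightarrow> x \<noteq> y \<and> c"
  shows "graph_iso (induced H R) ({0..<card R}, {(x, y). x < card R \<and> y < card R \<and> x \<noteq> y \<and> c})"
proof -
  obtain f where f: "bij_betw f R {0..<card R}"
    using ex_bij_betw_finite_nat[OF \<open>finite R\<close>] by blast
  have "(f x, f y) \<in> {(x, y). x < card R \<and> y < card R \<and> x \<noteq> y \<and> c} \<longleftrightarrow> (x, y) \<in> edges H"
    if "x \<in> R" "y \<in> R" for x y
    using that adj[OF that] bij_betw_apply[OF f] bij_betw_imp_inj_on[OF f]
    by (auto simp: inj_on_eq_iff)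
  then show ?thesis
    using f \<open>R \<subseteq> verts H\<close> unfolding graph_iso_def
    by (intro exI[of _ f]) (auto simp: Int_absorb1)
qed

lemma Free_complete_edgeless_card_bounded:
  "\<exists>r. \<forall>H \<in> Free {complete_graph n} \<inter> Free {edgeless_graph m}. card (verts H) < r"
proof -
  obtain r where r: "\<And>(V :: nat set) E. finite V \<Longrightarrow> r \<le> card V \<Longrightarrow>
      \<exists>R \<subseteq> V. card R = n \<and> clique R E \<or> card R = m \<and> indep R E"
    using ramsey2 by metis
  have "card (verts H) < r" if H: "H \<in> Free {complete_graph n} \<inter> Free {edgeless_graph m}" for H
  proof (rule ccontr)
    assume "\<not> card (verts H) < r"
    define E where "E = {{x, y} | x y. (x, y) \<in> edges H}"
    have wf: "wf_graph H"
      using H by (simp add: Free_def)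
    then obtain R where R: "R \<subseteq> verts H"
      and clique_or_indep: "card R = n \<and> clique R E \<or> card R = m \<and> indep R E"
      using r[of "verts H" E] \<open>\<not> card (verts H) < r\<close> by (auto simp: wf_graph_def)
    have "finite R"
      using R wf finite_subset by (auto simp: wf_graph_def)
    have E_iff: "{x, y} \<in> E \<longleftrightarrow> (x, y) \<in> edges H" for x y
      using wf by (auto simp: E_def wf_graph_def doubleton_eq_iff)
    have irrefl: "(x, x) \<notin> edges H" for x
      using wf by (simp add: wf_graph_def)
    from clique_or_indep show False
    proof
      assume "card R = n \<and> clique R E"
      then have "(x, y) \<in> edges H \<longleftrightarrow> x \<noteq> y \<and> True" if "x \<in> R" "y \<in> R" for x y
        using that E_iff irrefl by (auto simp: clique_def)
      from graph_iso_induced_uniform[OF \<open>finite R\<close> R this]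
      have "graph_iso (induced H R) (complete_graph n)"
        using \<open>card R = n \<and> clique R E\<close>
        by (simp add: complete_graph_def)
      then show False
        using H R by (auto simp: Free_def)
    next
      assume "card R = m \<and> indep R E"
      then have "(x, y) \<in> edges H \<longleftrightarrow> x \<noteq> y \<and> False" if "x \<in> R" "y \<in> R" for x y
        using that E_iff irrefl by (cases "x = y") (auto simp: indep_def)
      from graph_iso_induced_uniform[OF \<open>finite R\<close> R this]
      have "graph_iso (induced H R) (edgeless_graph m)"
        using \<open>card R = m \<and> indep R E\<close>
        by (simp add: edgeless_graph_def)
      then show False
        using H R by (auto simp: Free_def)
    qed
  qed
  then show ?thesis
    by blast
qed

lemma obtain_subset_card_Suc_exchange:
  assumes "finite B" "finite V" "card (B - V) < card (V - B)"
  obtains C where "C \<subseteq> V" "card C = card B + 1" "B - C = B - V"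
proof -
  obtain S where S: "S \<subseteq> V - B" "card S = card (B - V) + 1"
    using obtain_subset_with_card_n[of "card (B - V) + 1" "V - B"] assms(3) by auto
  have "finite S"
    using S(1) \<open>finite V\<close> finite_subset by blast
  have "card ((B \<inter> V) \<union> S) = card (B \<inter> V) + card (B - V) + 1"
    using S \<open>finite B\<close> \<open>finite S\<close> by (subst card_Un_disjoint) auto
  also have "\<dots> = card B + 1"
    using card_Int_Diff[OF \<open>finite B\<close>] by simp
  finally show ?thesis
    using S(1) by (intro that[of "(B \<inter> V) \<union> S"]) auto
qed

lemma compose_near_partition_or_augment:
  assumes "hereditary P" "hereditary Q"
    and small_PQ: "\<And>H. H \<in> P \<inter> Q \<Longrightarrow> card (verts H) < r"
    and "G \<in> compose P Q" "B \<subseteq> verts G" "induced G B \<in> P"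
  shows "(\<exists>A. A \<subseteq> verts G \<and> induced G A \<in> P \<and> induced G (verts G - A) \<in> Q \<and> card (A - B) \<le> r)
    \<or> (\<exists>C. C \<subseteq> verts G \<and> induced G C \<in> P \<and> card C = card B + 1 \<and> card (B - C) \<le> r)"
proof -
  obtain V1 V2 where V: "V1 \<union> V2 = verts G" "V1 \<inter> V2 = {}" "induced G V1 \<in> P" "induced G V2 \<in> Q"
    and "finite (verts G)"
    using \<open>G \<in> compose P Q\<close> unfolding Defs.compose_def wf_graph_def by blast
  have "V1 \<subseteq> verts G" "B - V1 \<subseteq> V2" "B - V1 \<subseteq> verts G"
    using \<open>B \<subseteq> verts G\<close> V(1) by blast+
  have "induced G (B - V1) \<in> P" "induced G (B - V1) \<in> Q"
    using hereditary_induced_subset[OF assms(1) \<open>induced G B \<in> P\<close> Diff_subset]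
      hereditary_induced_subset[OF assms(2) \<open>induced G V2 \<in> Q\<close> \<open>B - V1 \<subseteq> V2\<close>]
      \<open>B - V1 \<subseteq> verts G\<close> by auto
  then have small: "card (B - V1) < r"
    using small_PQ[of "induced G (B - V1)"] \<open>B - V1 \<subseteq> verts G\<close> by (simp add: Int_absorb1)
  show ?thesis
  proof (cases "card (V1 - B) \<le> r")
    case True
    moreover have "verts G - V1 = V2"
      using V(1,2) by auto
    ultimately show ?thesis
      using V by (intro disjI1 exI[of _ V1]) auto
  next
    case False
    have "finite B" "finite V1"
      using \<open>B \<subseteq> verts G\<close> \<open>V1 \<subseteq> verts G\<close> \<open>finite (verts G)\<close> by (simp_all add: finite_subset)
    moreover have "card (B - V1) < card (V1 - B)"
      using False small by linarith
    ultimately obtain C where C: "C \<subseteq> V1" "card C = card B + 1" "B - C = B - V1"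
      by (rule obtain_subset_card_Suc_exchange)
    have "C \<subseteq> verts G"
      using C(1) \<open>V1 \<subseteq> verts G\<close> by (rule subset_trans)
    moreover have "induced G C \<in> P"
      using hereditary_induced_subset[OF assms(1) V(3) C(1) \<open>C \<subseteq> verts G\<close>] .
    ultimately show ?thesis
      using C small by (intro disjI2 exI[of _ C]) simp
  qed
qed

(* Only heredity and the two Free inclusions are used. *)
theorem lemma3:
  fixes n m :: nat and P Q :: "graph set"
  assumes "n > 0" and "m > 0"
    and "graph_class P" and "additive P" and "hereditary P"
    and "P \<subseteq> Free {complete_graph n}"
    and "graph_class Q" and "hereditary Q" and "additive (compl_class Q)"
    and "Q \<subseteq> Free {edgeless_graph m}"
  shows "\<exists>\<tau>::nat. \<forall>G \<in> compose P Q. \<forall>B. B \<subseteq> verts G \<longrightarrow> induced G B \<in> P \<longrightarrow>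
           (\<exists>A. A \<subseteq> verts G \<and> induced G A \<in> P \<and> induced G (verts G - A) \<in> Q
                 \<and> card (A - B) \<le> \<tau>)
         \<or> (\<exists>C. C \<subseteq> verts G \<and> induced G C \<in> P \<and> card C = card B + 1
                 \<and> card (B - C) \<le> \<tau>)"
proof -
  obtain r where "\<forall>H \<in> Free {complete_graph n} \<inter> Free {edgeless_graph m}. card (verts H) < r"
    using Free_complete_edgeless_card_bounded by blast
  then have small: "\<And>H. H \<in> P \<inter> Q \<Longrightarrow> card (verts H) < r"
    using assms(6,10) by blast
  show ?thesis
    by (intro exI[of _ r] ballI allI impI) (rule compose_near_partition_or_augment[OF assms(5,8) small])
qed

end
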